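(* Let $n$ and $r$ be positive integers satisfying $\frac{r^2+r}{2}>n\geq r^{3/2}+\frac{r}{2}+1$. Then $$b(\mathrm{S}_{n,r})=\left\lceil\left(3\left(2n+r-\frac{5}{4}\right)+r^2\right)^{1/2}-r-\frac{3}{2}\right\rceil.$$
   Context: $\mathrm{S}_{n,r}$ denotes the symmetric group $\mathrm{S}_n$ acting naturally on the set of $r$-element subsets of $[n]=\{1,\dots,n\}$. For a permutation group $G$ on a set $\Omega$, $b(G)$ is the minimum size of a subset of $\Omega$ whose pointwise stabiliser in $G$ is trivial. *)

theory Defs
  imports Complex_Main "HOL-Combinatorics.Permutations"
begin

definition r_subsets :: "nat \<Rightarrow> nat \<Rightarrow> nat set set" where
  "r_subsets n r = {A. A \<subseteq> {1..n} \<and> card A = r}"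

definition is_base_Snr :: "nat \<Rightarrow> nat \<Rightarrow> nat set set \<Rightarrow> bool" where
  "is_base_Snr n r B \<longleftrightarrow> B \<subseteq> r_subsets n r \<and>
     (\<forall>\<sigma>. \<sigma> permutes {1..n} \<and> (\<forall>A\<in>B. \<sigma> ` A = A) \<longrightarrow> \<sigma> = id)"

definition base_size_Snr :: "nat \<Rightarrow> nat \<Rightarrow> nat" where
  "base_size_Snr n r = (LEAST k. \<exists>B. is_base_Snr n r B \<and> card B = k)"

end

(*
  If B is a base with k members, the membership patterns {A \<in> B. x \<in> A}, x \<in> [n], are pairwise
  distinct subsets of B whose sizes add up to k r. At most 1, k and (k choose 2) of them have size
  0, 1 and 2, so 3 n \<le> k r + 3 + 2 k + (k choose 2), i.e. 6 n \<le> k^2 + (2 r + 3) k + 6; the right-hand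
  side of the theorem is the least k satisfying this.

  Conversely, for that least K one chooses n distinct subsets of a K-set (the empty set, all
  singletons, and suitably many 2- and 3-subsets) of total size K r, and shifts points between
  members until every point lies in exactly r of them. Reading this family dually gives a base of
  size K. The hypotheses on n and r keep the required numbers of 2- and 3-subsets between 0 and
  (K choose 2), (K choose 3) respectively.
*)
theory Submission
  imports Defs
begin

section \<open>Bases as injective membership patterns\<close>

lemma transpose_image_eq:
  assumes "x \<in> A \<longleftrightarrow> y \<in> A"
  shows "Transposition.transpose x y ` A = A"
  using assms by (auto simp: Transposition.transpose_def image_def)

lemma is_base_Snr_iff_inj:
  "is_base_Snr n r B \<longleftrightarrow> B \<subseteq> r_subsets n r \<and> inj_on (\<lambda>x. {A\<in>B. x \<in> A}) {1..n}"
proof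
  assume base: "is_base_Snr n r B"
  show "B \<subseteq> r_subsets n r \<and> inj_on (\<lambda>x. {A\<in>B. x \<in> A}) {1..n}"
  proof (intro conjI inj_onI)
    show "B \<subseteq> r_subsets n r" using base unfolding is_base_Snr_def by blast
  next
    fix x y assume xy: "x \<in> {1..n}" "y \<in> {1..n}" and same: "{A\<in>B. x \<in> A} = {A\<in>B. y \<in> A}"
    have "Transposition.transpose x y ` A = A" if "A \<in> B" for A
      using same that by (intro transpose_image_eq) blast
    moreover have "Transposition.transpose x y permutes {1..n}"
      using xy by (rule permutes_swap_id)
    ultimately have "Transposition.transpose x y = id"
      using base unfolding is_base_Snr_def by blast
    then show "x = y" by (metis id_apply transpose_apply_first)
  qed
next
  assume "B \<subseteq> r_subsets n r \<and> inj_on (\<lambda>x. {A\<in>B. x \<in> A}) {1..n}"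
  then have sub: "B \<subseteq> r_subsets n r" and inj: "inj_on (\<lambda>x. {A\<in>B. x \<in> A}) {1..n}" by auto
  show "is_base_Snr n r B" unfolding is_base_Snr_def
  proof (intro conjI sub allI impI)
    fix \<sigma> assume \<sigma>: "\<sigma> permutes {1..n} \<and> (\<forall>A\<in>B. \<sigma> ` A = A)"
    show "\<sigma> = id"
    proof
      fix x
      show "\<sigma> x = id x"
      proof (cases "x \<in> {1..n}")
        case True
        have "\<sigma> x \<in> A \<longleftrightarrow> x \<in> A" if "A \<in> B" for A
          using \<sigma> that permutes_inj[of \<sigma>] by (metis inj_image_mem_iff)
        then have "{A\<in>B. \<sigma> x \<in> A} = {A\<in>B. x \<in> A}" by blast
        moreover have "\<sigma> x \<in> {1..n}" using \<sigma> True by (meson permutes_in_image)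
        ultimately show ?thesis using inj_onD[OF inj _ _ True] by simp
      next
        case False
        then show ?thesis using \<sigma> permutes_not_in by fastforce
      qed
    qed
  qed
qed

lemma sum_Pow_card_eq:
  assumes "finite B"
  shows "(\<Sum>S\<in>Pow B. if card S = j then a else 0) = a * (card B choose j)"
proof -
  have "Pow B \<inter> {S. card S = j} = {S. S \<subseteq> B \<and> card S = j}" by auto
  then show ?thesis using assms by (simp add: sum.If_cases n_subsets)
qed

lemma sum_Pow_three_minus_card:
  assumes "finite B"
  shows "(\<Sum>S\<in>Pow B. 3 - card S) = 3 + 2 * card B + (card B choose 2)"
proof -
  have "3 - m = (if m = 0 then 3 else 0) + (if m = 1 then 2 else 0) + (if m = 2 then 1 else 0)"
    for m :: nat by simp
  then have "(\<Sum>S\<in>Pow B. 3 - card S) = (\<Sum>S\<in>Pow B. if card S = 0 then 3 else 0)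
      + (\<Sum>S\<in>Pow B. if card S = 1 then 2 else 0) + (\<Sum>S\<in>Pow B. if card S = 2 then 1 else 0)"
    by (simp only: sum.distrib)
  then show ?thesis by (simp only: sum_Pow_card_eq[OF assms]) simp
qed

lemma three_mul_card_le_of_inj_Pow:
  assumes "finite B" and "finite X" and "inj_on g X" and "g ` X \<subseteq> Pow B"
  shows "3 * card X \<le> (\<Sum>x\<in>X. card (g x)) + 3 + 2 * card B + (card B choose 2)"
proof -
  \<comment> \<open>injectivity of g lets the correction terms 3 - card (g x) be bounded by a sum over Pow B\<close>
  have "3 * card X = (\<Sum>x\<in>X. 3)" by simp
  also have "\<dots> \<le> (\<Sum>x\<in>X. card (g x) + (3 - card (g x)))" by (rule sum_mono) simp
  also have "\<dots> = (\<Sum>x\<in>X. card (g x)) + (\<Sum>S\<in>g ` X. 3 - card S)"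
    by (simp add: sum.distrib sum.reindex[OF assms(3)])
  also have "\<dots> \<le> (\<Sum>x\<in>X. card (g x)) + (\<Sum>S\<in>Pow B. 3 - card S)"
    using assms(1,4) by (simp add: sum_mono2)
  finally show ?thesis by (simp add: sum_Pow_three_minus_card[OF assms(1)])
qed

lemma base_card_lower_bound:
  assumes "is_base_Snr n r B"
  shows "6 * n \<le> card B * card B + (2 * r + 3) * card B + 6"
proof -
  have sub: "B \<subseteq> r_subsets n r" and inj: "inj_on (\<lambda>x. {A\<in>B. x \<in> A}) {1..n}"
    using assms by (auto simp: is_base_Snr_iff_inj)
  have "B \<subseteq> Pow {1..n}" using sub by (auto simp: r_subsets_def)
  then have finB: "finite B" by (rule finite_subset) simp
  have "{x\<in>{1..n}. x \<in> A} = A" if "A \<in> B" for A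
    using sub that unfolding r_subsets_def by blast
  then have "\<forall>A\<in>B. card {x\<in>{1..n}. x \<in> A} = r"
    using sub by (auto simp: r_subsets_def)
  then have "(\<Sum>x\<in>{1..n}. card {A\<in>B. x \<in> A}) = r * card B"
    using finB by (intro sum_multicount) simp_all
  then have "3 * n \<le> r * card B + 3 + 2 * card B + (card B choose 2)"
    using three_mul_card_le_of_inj_Pow[OF finB _ inj] by auto
  moreover have "2 * (card B choose 2) + card B = card B * card B"
    by (cases "card B") (auto simp: choose_two)
  ultimately show ?thesis by (simp add: algebra_simps)
qed

section \<open>Regular families of subsets\<close>

definition family_degree :: "'a set set \<Rightarrow> 'a \<Rightarrow> nat" where
  "family_degree F l = card {S\<in>F. l \<in> S}"

lemma sum_family_degree:
  assumes "finite V" and "F \<subseteq> Pow V"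
  shows "(\<Sum>l\<in>V. family_degree F l) = (\<Sum>S\<in>F. card S)"
proof -
  have finF: "finite F" using assms by (meson finite_Pow_iff finite_subset)
  have "{l\<in>V. l \<in> S} = S" if "S \<in> F" for S
    using assms(2) that by auto
  then show ?thesis unfolding family_degree_def using assms(1) finF by (intro sum_multicount_gen) auto
qed

lemma family_degree_insert:
  assumes "finite F" and "P \<notin> F"
  shows "family_degree (insert P F) l = family_degree F l + of_bool (l \<in> P)"
proof (cases "l \<in> P")
  case True
  then have "{S\<in>insert P F. l \<in> S} = insert P {S\<in>F. l \<in> S}" by auto
  then show ?thesis unfolding family_degree_def using assms True by simp
next
  case False
  then have "{S\<in>insert P F. l \<in> S} = {S\<in>F. l \<in> S}" by auto
  then show ?thesis unfolding family_degree_def using False by simp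
qed

lemma exists_shiftable_member:
  assumes "finite F" and "family_degree F j < family_degree F i"
  shows "\<exists>S\<in>F. i \<in> S \<and> j \<notin> S \<and> insert j (S - {i}) \<notin> F"
proof (rule ccontr)
  assume "\<not> ?thesis"
  then have closed: "insert j (S - {i}) \<in> F" if "S \<in> F" "i \<in> S" "j \<notin> S" for S
    using that by blast
  define X where "X = {S\<in>F. i \<in> S \<and> j \<notin> S}"
  define Y where "Y = {S\<in>F. j \<in> S \<and> i \<notin> S}"
  define Z where "Z = {S\<in>F. i \<in> S \<and> j \<in> S}"
  have "i \<noteq> j" using assms(2) by auto
  have "inj_on (\<lambda>S. insert j (S - {i})) X"
    by (rule inj_on_inverseI[where g = "\<lambda>T. insert i (T - {j})"]) (auto simp: X_def)
  moreover have "(\<lambda>S. insert j (S - {i})) ` X \<subseteq> Y"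
    using closed \<open>i \<noteq> j\<close> by (auto simp: X_def Y_def)
  ultimately have "card X \<le> card Y"
    using assms(1) by (metis (no_types, lifting) Y_def card_inj_on_le finite_subset mem_Collect_eq subsetI)
  moreover have "family_degree F i = card X + card Z" "family_degree F j = card Y + card Z"
    unfolding family_degree_def X_def Y_def Z_def using assms(1)
    by (subst card_Un_disjoint[symmetric]; auto intro: arg_cong[where f = card])+
  ultimately show False using assms(2) by simp
qed

lemma exists_above_below_of_sum_eq:
  fixes f :: "'a \<Rightarrow> nat"
  assumes "finite V" and "(\<Sum>l\<in>V. f l) = card V * r" and "\<exists>l\<in>V. f l \<noteq> r"
  shows "\<exists>i\<in>V. r < f i" and "\<exists>j\<in>V. f j < r"
proof -
  have sum: "(\<Sum>l\<in>V. f l) = (\<Sum>l\<in>V. r)" using assms(2) by simp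
  show "\<exists>i\<in>V. r < f i"
  proof (rule ccontr)
    assume "\<not> ?thesis"
    then have le: "\<forall>l\<in>V. f l \<le> r" by (simp add: not_less)
    then have "\<exists>l\<in>V. f l < r" using assms(3) le_neq_implies_less by blast
    with assms(1) le have "(\<Sum>l\<in>V. f l) < (\<Sum>l\<in>V. r)" by (rule sum_strict_mono_ex1)
    then show False using sum by simp
  qed
  then show "\<exists>j\<in>V. f j < r"
    using sum assms(1) by (metis leI less_irrefl sum_strict_mono_ex1)
qed

lemma family_degree_shift:
  assumes "finite F" and "S \<in> F" and "i \<in> S" and "j \<notin> S" and "insert j (S - {i}) \<notin> F"
  shows "family_degree (insert (insert j (S - {i})) (F - {S})) l
    = (if l = i then family_degree F l - 1 else if l = j then family_degree F l + 1 else family_degree F l)"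
proof -
  have "family_degree F l = family_degree (F - {S}) l + of_bool (l \<in> S)"
    using family_degree_insert[of "F - {S}" S l] assms(1,2) by (simp add: insert_absorb)
  then show ?thesis using family_degree_insert[of "F - {S}" "insert j (S - {i})" l] assms by auto
qed

lemma regularize_step:
  assumes V: "finite V" and F: "F \<subseteq> Pow V" and total: "(\<Sum>S\<in>F. card S) = card V * r"
    and irregular: "\<exists>l\<in>V. family_degree F l \<noteq> r"
  obtains F' where "F' \<subseteq> Pow V" "card F' = card F" "(\<Sum>S\<in>F'. card S) = card V * r"
    "(\<Sum>l\<in>V. family_degree F' l - r) < (\<Sum>l\<in>V. family_degree F l - r)"
proof -
  have finF: "finite F" using V F by (meson finite_Pow_iff finite_subset)
  have "(\<Sum>l\<in>V. family_degree F l) = card V * r" using sum_family_degree[OF V F] total by simp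
  then obtain i j where i: "i \<in> V" "r < family_degree F i" and j: "j \<in> V" "family_degree F j < r"
    using exists_above_below_of_sum_eq[OF V _ irregular] by blast
  obtain S where S: "S \<in> F" "i \<in> S" "j \<notin> S" and new: "insert j (S - {i}) \<notin> F"
    using exists_shiftable_member[OF finF] i(2) j(2) by (metis less_trans)
  define S' where "S' = insert j (S - {i})"
  define F' where "F' = insert S' (F - {S})"
  have "finite S" using S(1) F V by (meson PowD finite_subset subsetD)
  then have card_S': "card S' = card S"
    unfolding S'_def using S by (simp add: card_Suc_Diff1 del: card_Diff_insert)
  have deg: "family_degree F' l = (if l = i then family_degree F l - 1
      else if l = j then family_degree F l + 1 else family_degree F l)" for l
    unfolding F'_def S'_def using family_degree_shift[OF finF S new] .
  show thesis
  proof
    show "F' \<subseteq> Pow V" unfolding F'_def S'_def using F S(1) j(1) by auto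
    show "card F' = card F" unfolding F'_def S'_def using card_Suc_Diff1[OF finF S(1)] finF new by simp
    show "(\<Sum>S\<in>F'. card S) = card V * r"
      unfolding F'_def using finF S(1) new total card_S' by (simp add: S'_def sum.remove)
    show "(\<Sum>l\<in>V. family_degree F' l - r) < (\<Sum>l\<in>V. family_degree F l - r)"
    proof (rule sum_strict_mono_ex1)
      show "\<forall>l\<in>V. family_degree F' l - r \<le> family_degree F l - r"
        using j(2) by (auto simp: deg)
      show "\<exists>l\<in>V. family_degree F' l - r < family_degree F l - r"
        using i by (auto simp: deg)
    qed (rule V)
  qed
qed

lemma regularize_family:
  assumes "finite V" and "F \<subseteq> Pow V" and "(\<Sum>S\<in>F. card S) = card V * r"
  shows "\<exists>F'. F' \<subseteq> Pow V \<and> card F' = card F \<and> (\<forall>l\<in>V. family_degree F' l = r)"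
  using assms(2,3)
proof (induction "\<Sum>l\<in>V. family_degree F l - r" arbitrary: F rule: less_induct)
  case less
  show ?case
  proof (cases "\<exists>l\<in>V. family_degree F l \<noteq> r")
    case True
    with assms(1) less.prems obtain F' where F': "F' \<subseteq> Pow V" "card F' = card F"
      "(\<Sum>S\<in>F'. card S) = card V * r"
      "(\<Sum>l\<in>V. family_degree F' l - r) < (\<Sum>l\<in>V. family_degree F l - r)"
      by (rule regularize_step)
    have "\<exists>F''. F'' \<subseteq> Pow V \<and> card F'' = card F' \<and> (\<forall>l\<in>V. family_degree F'' l = r)"
      using F'(4,1,3) by (rule less.hyps)
    with F'(2) show ?thesis by simp
  qed (use less.prems in blast)
qed

lemma exists_family_card_sum:
  assumes "finite V" and "a2 \<le> card V choose 2" and "a3 \<le> card V choose 3"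
  shows "\<exists>F. F \<subseteq> Pow V \<and> card F = 1 + card V + a2 + a3 \<and>
    (\<Sum>S\<in>F. card S) = card V + 2 * a2 + 3 * a3"
proof -
  define L where "L j = {S. S \<subseteq> V \<and> card S = j}" for j
  have card_L: "card (L j) = card V choose j" for j
    unfolding L_def using n_subsets[OF assms(1)] by simp
  have fin_L: "finite (L j)" for j
    unfolding L_def using assms(1) by (simp add: finite_subset[of _ "Pow V"] subset_iff)
  obtain P where P: "P \<subseteq> L 2" "card P = a2"
    using obtain_subset_with_card_n assms(2) card_L by metis
  obtain Q where Q: "Q \<subseteq> L 3" "card Q = a3"
    using obtain_subset_with_card_n assms(3) card_L by metis
  have fin: "finite P" "finite Q" using P Q fin_L by (auto intro: finite_subset)
  have disj: "L 0 \<inter> L 1 = {}" "(L 0 \<union> L 1) \<inter> P = {}" "(L 0 \<union> L 1 \<union> P) \<inter> Q = {}"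
    using P Q unfolding L_def by (auto simp: subset_iff)
  have sum_L: "(\<Sum>S\<in>A. card S) = j * card A" if "A \<subseteq> L j" for A j
    using that unfolding L_def by (simp add: subset_iff)
  define F where "F = L 0 \<union> L 1 \<union> P \<union> Q"
  have "F \<subseteq> Pow V" unfolding F_def L_def using P Q unfolding L_def by auto
  moreover have "card F = 1 + card V + a2 + a3"
    unfolding F_def using disj fin_L fin card_L P Q by (simp add: card_Un_disjoint)
  moreover have "(\<Sum>S\<in>F. card S) = card V + 2 * a2 + 3 * a3"
  proof -
    have "(\<Sum>S\<in>F. card S)
        = (\<Sum>S\<in>L 0. card S) + (\<Sum>S\<in>L 1. card S) + (\<Sum>S\<in>P. card S) + (\<Sum>S\<in>Q. card S)"
      unfolding F_def using disj fin_L fin by (simp add: sum.union_disjoint)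
    also have "\<dots> = 0 * card (L 0) + 1 * card (L 1) + 2 * card P + 3 * card Q"
      by (simp only: sum_L[of "L 0" 0] sum_L[of "L 1" 1] sum_L[OF P(1)] sum_L[OF Q(1)] order_refl)
    finally show ?thesis using card_L P Q by simp
  qed
  ultimately show ?thesis by blast
qed

lemma base_of_regular_family:
  assumes "finite V" and "F \<subseteq> Pow V" and "card F = n" and "\<forall>l\<in>V. family_degree F l = r"
  shows "\<exists>B. is_base_Snr n r B \<and> card B \<le> card V"
proof -
  \<comment> \<open>f identifies the points of [n] with the members of F; l \<in> V yields the base set A l\<close>
  have "finite F" using assms(1,2) by (meson finite_Pow_iff finite_subset)
  then obtain f where f: "bij_betw f {1..n} F"
    using assms(3) by (metis ex_bij_betw_nat_finite_1)
  define A where "A l = {x\<in>{1..n}. l \<in> f x}" for l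
  define B where "B = A ` V"
  have "card (A l) = r" if "l \<in> V" for l
  proof -
    have "inj_on f (A l)"
      using bij_betw_imp_inj_on[OF f] by (rule inj_on_subset) (auto simp: A_def)
    moreover have "f ` A l = {S\<in>F. l \<in> S}"
      using f by (auto simp: A_def bij_betw_def)
    ultimately show ?thesis using assms(4) that unfolding family_degree_def by (metis card_image)
  qed
  then have "B \<subseteq> r_subsets n r" unfolding B_def r_subsets_def A_def by auto
  moreover have "inj_on (\<lambda>x. {A\<in>B. x \<in> A}) {1..n}"
  proof (rule inj_onI)
    fix x y assume xy: "x \<in> {1..n}" "y \<in> {1..n}" and same: "{C\<in>B. x \<in> C} = {C\<in>B. y \<in> C}"
    have "x \<in> A l \<longleftrightarrow> y \<in> A l" if "l \<in> V" for l
    proof -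
      have "A l \<in> B" unfolding B_def using that by (rule imageI)
      then show ?thesis using same by (metis (mono_tags, lifting) mem_Collect_eq)
    qed
    then have "l \<in> f x \<longleftrightarrow> l \<in> f y" if "l \<in> V" for l
      using that xy unfolding A_def by auto
    moreover have "f x \<subseteq> V" "f y \<subseteq> V"
      using xy bij_betw_apply[OF f] assms(2) by auto
    ultimately have "f x = f y" by blast
    then show "x = y" using f xy by (metis bij_betw_imp_inj_on inj_onD)
  qed
  ultimately have "is_base_Snr n r B" by (simp add: is_base_Snr_iff_inj)
  moreover have "card B \<le> card V" unfolding B_def using assms(1) by (rule card_image_le)
  ultimately show ?thesis by blast
qed

section \<open>Arithmetic of the least base size\<close>

lemma two_mul_choose_two: "2 * int (n choose 2) = int n * (int n - 1)"
proof (cases n)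
  case (Suc m)
  have "2 * (n choose 2) = n * m"
    using Suc Suc_times_binomial[of 1 m] by (simp only: numeral_2_eq_2 One_nat_def binomial_1)
  then have "int (2 * (n choose 2)) = int (n * m)" by (simp only:)
  then show ?thesis using Suc by (simp add: algebra_simps)
qed simp

lemma six_mul_choose_three: "6 * int (n choose 3) = int n * (int n - 1) * (int n - 2)"
proof (cases n)
  case (Suc m)
  have "3 * (n choose 3) = n * (m choose 2)"
    using Suc Suc_times_binomial[of 2 m] by (simp only: numeral_3_eq_3 numeral_2_eq_2)
  then have "3 * int (n choose 3) = int n * int (m choose 2)" by (simp flip: of_nat_mult)
  then have "6 * int (n choose 3) = int n * (2 * int (m choose 2))" by simp
  then show ?thesis using Suc two_mul_choose_two[of m] by (simp add: algebra_simps)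
qed simp

lemma exists_level_counts:
  fixes K r n :: nat
  assumes fits: "6 * n \<le> K * K + (2 * r + 3) * K + 6"
    and minimal: "K * K + (2 * r + 1) * K + 5 \<le> 6 * n + 2 * r"
    and "K \<le> r" and large: "3 * K + 2 * r + 1 \<le> K * K"
  shows "\<exists>a2 a3. a2 \<le> K choose 2 \<and> a3 \<le> K choose 3 \<and>
    n = 1 + K + a2 + a3 \<and> K * r = K + 2 * a2 + 3 * a3"
proof -
  \<comment> \<open>the unique solution of n = 1 + K + a2 + a3 and K r = K + 2 a2 + 3 a3\<close>
  define a2 :: int where "a2 = 3 * int n - 3 - 2 * int K - int K * int r"
  define a3 :: int where "a3 = int K * (int r + 1) - 2 * int n + 2"
  have fits': "6 * int n \<le> int K * K + (2 * r + 3) * K + 6"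
    using fits by (metis (mono_tags) of_nat_le_iff of_nat_add of_nat_mult of_nat_numeral)
  have minimal': "int K * K + (2 * r + 1) * K + 5 \<le> 6 * n + 2 * r"
    using minimal by (metis (mono_tags) of_nat_le_iff of_nat_add of_nat_mult of_nat_numeral of_nat_1)
  have large': "3 * int K + 2 * r + 1 \<le> K * K"
    using large by (metis (mono_tags) of_nat_le_iff of_nat_add of_nat_mult of_nat_numeral of_nat_1)
  have "int K * K \<le> int K * r" using \<open>K \<le> r\<close> by (simp add: mult_left_mono)
  then have "0 \<le> a3" unfolding a3_def using fits' by (simp add: algebra_simps)
  have "0 \<le> a2" unfolding a2_def using minimal' large' by (simp add: algebra_simps)
  have "a2 \<le> int (K choose 2)"
    unfolding a2_def using fits' two_mul_choose_two[of K] by (simp add: algebra_simps)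
  \<comment> \<open>a3 \<le> K choose 3 amounts to 2 r (K + 2) + K^2 + 2 K + 2 \<le> K^3, a consequence of large\<close>
  have "2 * int r * (K + 2) \<le> (int K * K - 3 * K - 1) * (K + 2)"
    using large' by (intro mult_right_mono) auto
  then have "a3 \<le> int (K choose 3)"
    unfolding a3_def using minimal' six_mul_choose_three[of K] by (simp add: algebra_simps)
  show ?thesis
  proof (intro exI conjI)
    show "nat a2 \<le> K choose 2" "nat a3 \<le> K choose 3"
      using \<open>a2 \<le> int (K choose 2)\<close> \<open>a3 \<le> int (K choose 3)\<close> by simp_all
    show "n = 1 + K + nat a2 + nat a3"
      using \<open>0 \<le> a2\<close> \<open>0 \<le> a3\<close> unfolding a2_def a3_def by (simp add: algebra_simps)
    have "int (K * r) = int (K + 2 * nat a2 + 3 * nat a3)"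
      using \<open>0 \<le> a2\<close> \<open>0 \<le> a3\<close> unfolding a2_def a3_def by (simp add: algebra_simps)
    then show "K * r = K + 2 * nat a2 + 3 * nat a3" by (simp only: of_nat_eq_iff)
  qed
qed

lemma six_le_of_cube_le_sq:
  fixes r m :: nat
  assumes "4 * r ^ 3 \<le> m ^ 2" and "m + 3 \<le> r ^ 2"
  shows "6 \<le> r"
proof (rule ccontr)
  assume "\<not> 6 \<le> r"
  then have "r \<in> {0,1,2,3,4,5}" by auto
  moreover have "m \<le> r ^ 2 - 3" using assms(2) by simp
  then have "4 * r ^ 3 \<le> (r ^ 2 - 3) ^ 2"
    using assms(1) power_mono by (metis le_trans zero_le)
  ultimately show False using assms(2) by auto
qed

lemma three_sqrt_sub_three_le:
  fixes r K m :: nat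
  assumes "4 * r ^ 3 \<le> m ^ 2" and "3 * m + 3 * r \<le> K * K + (2 * r + 3) * K"
  shows "3 * sqrt r - 3 \<le> K"
proof (rule ccontr)
  define s where "s = sqrt r"
  define t where "t = 3 * s - 3"
  assume "\<not> 3 * sqrt r - 3 \<le> K"
  then have Kt: "K < t" unfolding t_def s_def by simp
  have s: "0 \<le> s" "s\<^sup>2 = r" unfolding s_def by simp_all
  have "(2 * r * s)\<^sup>2 = real (4 * r ^ 3)"
    using s by (simp add: power_mult_distrib power2_eq_square power3_eq_cube)
  also have "\<dots> \<le> (real m)\<^sup>2" using assms(1) by (metis of_nat_le_iff of_nat_power)
  finally have "2 * r * s \<le> m" using s by (meson abs_le_square_iff power2_le_imp_le of_nat_0_le_iff)
  moreover have "real (3 * m + 3 * r) \<le> real (K * K + (2 * r + 3) * K)"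
    using assms(2) by (simp only: of_nat_le_iff)
  ultimately have "6 * r * s + 3 * r \<le> real K * K + (2 * r + 3) * K"
    by simp
  also have "\<dots> < t * t + (2 * r + 3) * t"
    using Kt by (intro add_less_le_mono mult_strict_mono mult_left_mono) auto
  also have "\<dots> = 6 * r * s + 3 * r - 9 * s"
    using s unfolding t_def by (simp add: algebra_simps power2_eq_square power3_eq_cube)
  finally show False using s by simp
qed

lemma three_mul_add_le_sq:
  fixes r K m :: nat
  assumes "6 \<le> r" and "4 * r ^ 3 \<le> m ^ 2" and "3 * m + 3 * r \<le> K * K + (2 * r + 3) * K"
  shows "3 * K + 2 * r + 1 \<le> K * K"
proof (cases "r \<le> 9")
  case small_r: True
  \<comment> \<open>here the bound K \<ge> 3 sqrt r - 3 is too weak (already for r = 6): check the finitely many cases\<close>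
  show ?thesis
  proof (cases "K \<le> 6")
    case True
    have "3 * m \<le> K * K + (2 * r + 3) * K - 3 * r" using assms(3) by simp
    then have "(3 * m) ^ 2 \<le> (K * K + (2 * r + 3) * K - 3 * r) ^ 2" by (rule power_mono) simp
    then have bound: "36 * r ^ 3 \<le> (K * K + (2 * r + 3) * K - 3 * r) ^ 2"
      using assms(2) by (simp add: power_mult_distrib)
    have "r \<in> {6,7,8,9}" "K \<in> {0,1,2,3,4,5,6}" using assms(1) small_r True by auto
    then show ?thesis using bound by (simp only: insert_iff empty_iff) (elim disjE; simp)
  next
    case False
    then have "7 * K \<le> K * K" by simp
    then show ?thesis using small_r False by linarith
  qed
next
  case False
  define s where "s = sqrt r"
  define t where "t = 3 * s - 3"
  have s: "0 \<le> s" "s\<^sup>2 = r" unfolding s_def by simp_all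
  have "(79/25)\<^sup>2 \<le> s\<^sup>2" using s False by (simp add: power2_eq_square)
  then have s_ge: "79/25 \<le> s" using s(1) by (rule power2_le_imp_le)
  have Kt: "t \<le> K" unfolding t_def s_def by (rule three_sqrt_sub_three_le[OF assms(2,3)])
  have "t * t - 3 * t \<le> real K * K - 3 * K"
  proof -
    have "real K * K - 3 * K - (t * t - 3 * t) = (K - t) * (K + t - 3)" by (simp add: algebra_simps)
    also have "\<dots> \<ge> 0" using Kt s_ge unfolding t_def by (intro mult_nonneg_nonneg) auto
    finally show ?thesis by simp
  qed
  moreover have "t * t - 3 * t - 2 * r - 1 = 7 * (s - 79/25)\<^sup>2 + 431/25 * (s - 79/25) + 987/625"
    unfolding t_def by (simp add: s(2)[symmetric] field_simps power2_eq_square)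
  moreover have "0 \<le> 7 * (s - 79/25)\<^sup>2 + 431/25 * (s - 79/25) + 987/625" using s_ge by simp
  ultimately have "real (3 * K + 2 * r + 1) \<le> real (K * K)" by simp
  then show ?thesis by (simp only: of_nat_le_iff)
qed

lemma exists_base_of_card:
  fixes K r n :: nat
  assumes "6 * n \<le> K * K + (2 * r + 3) * K + 6" and "K * K + (2 * r + 1) * K + 5 \<le> 6 * n + 2 * r"
    and "K \<le> r" and "3 * K + 2 * r + 1 \<le> K * K"
  shows "\<exists>B. is_base_Snr n r B \<and> card B \<le> K"
proof -
  obtain a2 a3 where "a2 \<le> K choose 2" "a3 \<le> K choose 3"
    "n = 1 + K + a2 + a3" "K * r = K + 2 * a2 + 3 * a3"
    using exists_level_counts[OF assms] by blast
  then obtain F where "F \<subseteq> Pow {..<K}" "card F = n" "(\<Sum>S\<in>F. card S) = card {..<K} * r"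
    using exists_family_card_sum[of "{..<K}" a2 a3] by auto
  then obtain F' where "F' \<subseteq> Pow {..<K}" "card F' = n" "\<forall>l\<in>{..<K}. family_degree F' l = r"
    using regularize_family[of "{..<K}" F r] by auto
  then show ?thesis using base_of_regular_family[of "{..<K}" F' n r] by auto
qed

lemma base_size_Snr_eq_Least:
  fixes n r :: nat
  assumes upper: "2 * n < r * r + r" and cube: "4 * r ^ 3 \<le> (2 * n - r - 2) ^ 2"
  shows "base_size_Snr n r = (LEAST k. 6 * n \<le> k * k + (2 * r + 3) * k + 6)"
proof -
  define K where "K = (LEAST k. 6 * n \<le> k * k + (2 * r + 3) * k + 6)"
  have "0 < r" using upper by (cases r) simp_all
  then have "2 * n - r - 2 \<noteq> 0" using cube by (rule_tac notI) simp
  then have "r + 2 < 2 * n" by simp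
  have "6 \<le> r" using cube by (rule six_le_of_cube_le_sq) (use upper \<open>r + 2 < 2 * n\<close> in \<open>simp add: power2_eq_square\<close>)
  have fits_r: "6 * n \<le> r * r + (2 * r + 3) * r + 6" using upper by (simp add: algebra_simps)
  then have fits: "6 * n \<le> K * K + (2 * r + 3) * K + 6" unfolding K_def by (rule LeastI)
  have "K \<le> r" unfolding K_def using fits_r by (rule Least_le)
  have "K \<noteq> 0" using fits \<open>r + 2 < 2 * n\<close> by (rule_tac notI) simp
  then obtain k where K: "K = Suc k" by (cases K) auto
  then have "k < K" by simp
  then have "\<not> 6 * n \<le> k * k + (2 * r + 3) * k + 6" unfolding K_def by (rule not_less_Least)
  then have minimal: "K * K + (2 * r + 1) * K + 5 \<le> 6 * n + 2 * r" unfolding K by (simp add: algebra_simps)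
  have "3 * (2 * n - r - 2) + 3 * r \<le> K * K + (2 * r + 3) * K" using fits \<open>r + 2 < 2 * n\<close> by simp
  with \<open>6 \<le> r\<close> cube have large: "3 * K + 2 * r + 1 \<le> K * K" by (rule three_mul_add_le_sq)
  obtain B where B: "is_base_Snr n r B" "card B \<le> K"
    using exists_base_of_card[OF fits minimal \<open>K \<le> r\<close> large] by blast
  have lower: "K \<le> card B'" if "is_base_Snr n r B'" for B'
    unfolding K_def using base_card_lower_bound[OF that] by (rule Least_le)
  show ?thesis unfolding base_size_Snr_def K_def[symmetric]
  proof (rule Least_equality)
    show "\<exists>B. is_base_Snr n r B \<and> card B = K" using B lower[OF B(1)] by auto
  qed (use lower in blast)
qed

lemma cube_le_sq_of_powr_le:
  fixes n r :: nat
  assumes "real r powr (3/2) + real r / 2 + 1 \<le> real n"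
  shows "4 * r ^ 3 \<le> (2 * n - r - 2) ^ 2"
proof -
  have "real r powr (3/2) = real r * sqrt r"
    by (simp add: powr_add[of "real r" 1 "1/2", simplified] powr_half_sqrt)
  then have le: "2 * real r * sqrt r \<le> real (2 * n - r - 2)" using assms by simp
  have "real (4 * r ^ 3) = (2 * real r * sqrt r)\<^sup>2"
    by (simp add: power_mult_distrib power2_eq_square power3_eq_cube)
  also have "\<dots> \<le> (real (2 * n - r - 2))\<^sup>2" using le by (intro power_mono) auto
  finally show ?thesis by (simp only: of_nat_power[symmetric] of_nat_le_iff)
qed

lemma sqrt_bound_le_iff:
  fixes n r :: nat and y :: real
  assumes "0 \<le> y + r + 3/2"
  shows "sqrt (3 * (2 * real n + real r - 5/4) + real r ^ 2) - real r - 3/2 \<le> y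
    \<longleftrightarrow> 6 * real n \<le> y\<^sup>2 + (2 * real r + 3) * y + 6"
proof -
  have "sqrt x \<le> z \<longleftrightarrow> x \<le> z\<^sup>2" if "0 \<le> z" for x z :: real
    using that real_le_lsqrt sqrt_le_D by blast
  then have "sqrt (3 * (2 * real n + real r - 5/4) + real r ^ 2) - real r - 3/2 \<le> y
      \<longleftrightarrow> 3 * (2 * real n + real r - 5/4) + real r ^ 2 \<le> (y + r + 3/2)\<^sup>2"
    using assms by (simp add: algebra_simps)
  also have "\<dots> \<longleftrightarrow> 6 * real n \<le> y\<^sup>2 + (2 * real r + 3) * y + 6"
    by (simp add: algebra_simps power2_eq_square)
  finally show ?thesis .
qed

lemma ceiling_sqrt_bound_eq_Least:
  fixes n r :: nat
  assumes "0 < n"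
  shows "\<lceil>sqrt (3 * (2 * real n + real r - 5/4) + real r ^ 2) - real r - 3/2\<rceil>
    = int (LEAST k. 6 * n \<le> k * k + (2 * r + 3) * k + 6)"
proof (rule ceiling_unique)
  define K where "K = (LEAST k. 6 * n \<le> k * k + (2 * r + 3) * k + 6)"
  have "6 * n \<le> 2 * n * (2 * n) + (2 * r + 3) * (2 * n) + 6" by (simp add: algebra_simps)
  then have "6 * n \<le> K * K + (2 * r + 3) * K + 6" unfolding K_def by (rule LeastI)
  then have "real (6 * n) \<le> real (K * K + (2 * r + 3) * K + 6)" by (simp only: of_nat_le_iff)
  then have "6 * real n \<le> (real K)\<^sup>2 + (2 * real r + 3) * real K + 6" by (simp add: power2_eq_square)
  then show "sqrt (3 * (2 * real n + real r - 5/4) + real r ^ 2) - real r - 3/2 \<le> of_int (int K)"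
    by (subst sqrt_bound_le_iff) auto
  have "\<not> 6 * real n \<le> (real K - 1)\<^sup>2 + (2 * real r + 3) * (real K - 1) + 6"
  proof (cases K)
    case 0
    then show ?thesis using assms by (simp add: power2_eq_square)
  next
    case (Suc k)
    then have "k < K" by simp
    then have "\<not> 6 * n \<le> k * k + (2 * r + 3) * k + 6" unfolding K_def by (rule not_less_Least)
    then have "\<not> real (6 * n) \<le> real (k * k + (2 * r + 3) * k + 6)" by (simp only: of_nat_le_iff not_False_eq_True)
    then show ?thesis using Suc by (simp add: power2_eq_square)
  qed
  then have "\<not> sqrt (3 * (2 * real n + real r - 5/4) + real r ^ 2) - real r - 3/2 \<le> real K - 1"
    by (subst sqrt_bound_le_iff) auto
  then show "of_int (int K) - 1 < sqrt (3 * (2 * real n + real r - 5/4) + real r ^ 2) - real r - 3/2"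
    by simp
qed

theorem corollary3p4:
  fixes n r :: nat
  assumes "0 < n" and "0 < r"
    and "real n < (real r ^ 2 + real r) / 2"
    and "real n \<ge> real r powr (3/2) + real r / 2 + 1"
  shows "int (base_size_Snr n r) =
    \<lceil>sqrt (3 * (2 * real n + real r - 5/4) + real r ^ 2) - real r - 3/2\<rceil>"
proof -
  have "real (2 * n) < real (r * r + r)"
    using assms(3) by (simp add: power2_eq_square)
  then have "2 * n < r * r + r" by (simp only: of_nat_less_iff)
  moreover have "4 * r ^ 3 \<le> (2 * n - r - 2) ^ 2"
    using assms(4) by (rule cube_le_sq_of_powr_le)
  ultimately have "base_size_Snr n r = (LEAST k. 6 * n \<le> k * k + (2 * r + 3) * k + 6)"
    by (rule base_size_Snr_eq_Least)
  then show ?thesis using ceiling_sqrt_bound_eq_Least[OF assms(1)] by simp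
qed

end
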